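(* For every integer $l\ge1$, let $m=5l+3$, $L_1=[2l+1]$, $L_2=\{2l+2,\dots,4l+2\}$, $L_3=\{4l+3,\dots,5l+3\}$, and let $O_{L_s}$, $E_{L_s}$ denote the sets of odd and even elements of $L_s$. Let $\mathcal{I}_7(l)$ be the instance on $[m]$ with $A_i=E_{L_1}\cup(L_2\setminus\{i+2l+1\})\cup L_3$ for $i\in O_{L_1}$; $A_i=O_{L_2}\cup(L_1\setminus\{i\})\cup L_3$ for $i\in E_{L_1}$; $A_i=O_{L_2}\cup(L_1\setminus\{i-(2l+1)\})\cup L_3$ for $i\in E_{L_2}$; $A_i=E_{L_1}\cup(L_2\setminus\{i\})\cup L_3$ for $i\in O_{L_2}$; $A_i=\{2(i-4l-2)-1,\ 2(i-3l-2)\}$ for $i\in L_3$. Then the UMCD coding scheme is optimal for $\mathcal{I}_7(l)$, i.e. $\beta(\mathcal{I}_7(l))=\beta_{\text{UMCD}}(\mathcal{I}_7(l))$.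
   Context: Index coding: messages $x_i\in\mathbb{F}_q^t$; receiver $i$ wants $x_i$ and knows $x_j$, $j\in A_i\subseteq[m]\setminus\{i\}$. A $(t,r)$ index code is an encoder $\phi:\mathbb{F}_q^{mt}\to\mathbb{F}_q^r$ with decoders $\psi_i$ satisfying $\psi_i(\phi(x),(x_j)_{j\in A_i})=x_i$ for all messages and $i$; $\beta(\mathcal{I})$ is the infimum of $r/t$ over all $t$ and codes (over finite fields). $B_i=[m]\setminus(A_i\cup\{i\})$. For a $0/1$ matrix $\boldsymbol{G}$, $\boldsymbol{G}_{[k]}^L$ is the submatrix of the first $k$ rows and columns $L$; $\mathrm{mcm}$ is the maximum number of $1$-entries in distinct rows and columns (0 if no columns). UMCD algorithm: $N=[m]$, $k=0$; while $N\ne\emptyset$: $k\leftarrow k+1$; pick $w\in N$ minimizing $|A_w|$ over $N$ (arbitrary tie-breaking); row $k$ of $\boldsymbol{G}$ is the indicator of $\{w\}\cup A_w$; remove $w$ from $N$; remove every $i\in N$ with $\mathrm{mcm}(\boldsymbol{G}_{[k]}^{\{i\}\cup B_i})=\mathrm{mcm}(\boldsymbol{G}_{[k]}^{B_i})+1$; output $\beta_{\text{UMCD}}=k$. *)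

theory Defs
  imports "HOL-Algebra.Ring" "HOL-Library.FuncSet" Complex_Main
begin

text \<open>Finite fields are HOL-Algebra fields with finite carrier (carrier inside nat;
  every finite field is isomorphic to such one).\<close>

definition messages :: "nat ring \<Rightarrow> nat \<Rightarrow> nat \<Rightarrow> (nat \<Rightarrow> nat \<Rightarrow> nat) set" where
  "messages R m t = PiE {1..m} (\<lambda>_. PiE {..<t} (\<lambda>_. carrier R))"

definition codewords :: "nat ring \<Rightarrow> nat \<Rightarrow> (nat \<Rightarrow> nat) set" where
  "codewords R r = PiE {..<r} (\<lambda>_. carrier R)"

definition is_index_code ::
  "nat ring \<Rightarrow> nat \<Rightarrow> (nat \<Rightarrow> nat set) \<Rightarrow> nat \<Rightarrow> nat \<Rightarrow> ((nat \<Rightarrow> nat \<Rightarrow> nat) \<Rightarrow> (nat \<Rightarrow> nat)) \<Rightarrow> bool" where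
  "is_index_code R m A t r \<phi> \<longleftrightarrow>
     \<phi> \<in> messages R m t \<rightarrow> codewords R r \<and>
     (\<forall>i\<in>{1..m}. \<exists>\<psi>. \<forall>x\<in>messages R m t. \<psi> (\<phi> x) (restrict x (A i)) = x i)"

definition beta :: "nat \<Rightarrow> (nat \<Rightarrow> nat set) \<Rightarrow> real" where
  "beta m A = Inf {real r / real t | r t. \<exists>(R::nat ring) \<phi>.
      field R \<and> finite (carrier R) \<and> t \<ge> 1 \<and> is_index_code R m A t r \<phi>}"

definition Bset :: "nat \<Rightarrow> (nat \<Rightarrow> nat set) \<Rightarrow> nat \<Rightarrow> nat set" where
  "Bset m A i = {1..m} - (A i \<union> {i})"

text \<open>Rows of G are stored as a list of sets (row s = indicator of rows ! s).
  mcm rows L = maximum number of 1-entries of the submatrix (all rows, columns L)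
  lying in pairwise distinct rows and columns.\<close>

definition mcm :: "nat set list \<Rightarrow> nat set \<Rightarrow> nat" where
  "mcm rows L = Max {card M | M. M \<subseteq> {(s, c). s < length rows \<and> c \<in> L \<and> c \<in> rows ! s}
                                 \<and> inj_on fst M \<and> inj_on snd M}"

text \<open>Reachable states (N, rows) of the UMCD algorithm, for any tie-breaking.\<close>

inductive umcd_reach :: "nat \<Rightarrow> (nat \<Rightarrow> nat set) \<Rightarrow> nat set \<Rightarrow> nat set list \<Rightarrow> bool"
  for m :: nat and A :: "nat \<Rightarrow> nat set" where
  init: "umcd_reach m A {1..m} []"
| step: "umcd_reach m A N rows \<Longrightarrow> N \<noteq> {} \<Longrightarrow> w \<in> N \<Longrightarrow>
         (\<forall>v\<in>N. card (A w) \<le> card (A v)) \<Longrightarrow>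
         rows' = rows @ [insert w (A w)] \<Longrightarrow>
         N' = {i \<in> N - {w}. mcm rows' (insert i (Bset m A i)) \<noteq> mcm rows' (Bset m A i) + 1} \<Longrightarrow>
         umcd_reach m A N' rows'"

definition umcd_output :: "nat \<Rightarrow> (nat \<Rightarrow> nat set) \<Rightarrow> nat \<Rightarrow> bool" where
  "umcd_output m A k \<longleftrightarrow> (\<exists>rows. umcd_reach m A {} rows \<and> k = length rows)"

definition odds :: "nat set \<Rightarrow> nat set" where "odds S = {i \<in> S. odd i}"
definition evens :: "nat set \<Rightarrow> nat set" where "evens S = {i \<in> S. even i}"

definition I7_m :: "nat \<Rightarrow> nat" where "I7_m l = 5*l + 3"

definition I7_A :: "nat \<Rightarrow> nat \<Rightarrow> nat set" where
  "I7_A l i =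
    (let L1 = {1..2*l+1}; L2 = {2*l+2..4*l+2}; L3 = {4*l+3..5*l+3} in
     if i \<in> odds L1 then evens L1 \<union> (L2 - {i + 2*l + 1}) \<union> L3
     else if i \<in> evens L1 then odds L2 \<union> (L1 - {i}) \<union> L3
     else if i \<in> evens L2 then odds L2 \<union> (L1 - {i - (2*l + 1)}) \<union> L3
     else if i \<in> odds L2 then evens L1 \<union> (L2 - {i}) \<union> L3
     else if i \<in> L3 then {2*(i - 4*l - 2) - 1, 2*(i - 3*l - 2)}
     else {})"

end

theory Submission
  imports Defs
begin

text \<open>UMCD first serves the l+1 receivers of L3, whose side information is smallest (two
  messages, forming one of the pairs c, c + 2l + 1 with c odd in L1). Their rows are pairwise
  disjoint and each of them meets every B_i, so no receiver is removed meanwhile. The row of the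
  next receiver w in L1 \<union> L2 then removes all remaining receivers: it contains i or its partner, and
  every L3 row still meets the rest of {i} \<union> B_i. Hence beta_UMCD = l+2.

  Optimality: {2} \<union> L3 induces an acyclic side-information graph, so an index code must be
  injective on messages supported there, giving beta \<ge> l+2. Conversely, the l+1 parities of the
  rows of L3 together with the parity of L1 \<union> O_L2 form a binary scalar code of length l+2: a
  receiver in L1 \<union> L2 learns from the row parities that the unknown members of each pair are
  equal or complementary, which leaves only its own pair, and the last parity separates the
  two members of that pair.\<close>

section \<open>Index codes\<close>

definition GF2 :: "nat ring" where
  "GF2 = \<lparr>carrier = {0, 1}, monoid.mult = (*), one = 1, zero = 0, add = (\<lambda>x y. (x + y) mod 2)\<rparr>"

lemma field_GF2: "field GF2"
proof -
  have "cring GF2"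
    by (rule cringI) (auto intro!: abelian_groupI comm_monoidI simp: GF2_def)
  then interpret cring GF2 .
  have "domain GF2"
    by unfold_locales (auto simp: GF2_def)
  moreover have "Units GF2 = carrier GF2 - {\<zero>\<^bsub>GF2\<^esub>}"
    by (auto simp: GF2_def Units_def)
  ultimately show ?thesis
    by (simp add: field_def field_axioms_def)
qed

lemma ex_decoder_iff:
  "(\<exists>\<psi>. \<forall>x\<in>M. \<psi> (\<phi> x) (g x) = h x) \<longleftrightarrow>
   (\<forall>x\<in>M. \<forall>y\<in>M. \<phi> x = \<phi> y \<longrightarrow> g x = g y \<longrightarrow> h x = h y)"
proof
  assume "\<forall>x\<in>M. \<forall>y\<in>M. \<phi> x = \<phi> y \<longrightarrow> g x = g y \<longrightarrow> h x = h y"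
  then have "\<forall>x\<in>M. h (SOME x'. x' \<in> M \<and> \<phi> x' = \<phi> x \<and> g x' = g x) = h x"
    by (metis (mono_tags, lifting) someI)
  then show "\<exists>\<psi>. \<forall>x\<in>M. \<psi> (\<phi> x) (g x) = h x"
    by (intro exI[of _ "\<lambda>a b. h (SOME x'. x' \<in> M \<and> \<phi> x' = a \<and> g x' = b)"]) simp
qed metis

lemma is_index_code_iff:
  "is_index_code R m A t r \<phi> \<longleftrightarrow> \<phi> \<in> messages R m t \<rightarrow> codewords R r \<and>
     (\<forall>i\<in>{1..m}. \<forall>x\<in>messages R m t. \<forall>y\<in>messages R m t.
        \<phi> x = \<phi> y \<longrightarrow> restrict x (A i) = restrict y (A i) \<longrightarrow> x i = y i)"
  unfolding is_index_code_def ex_decoder_iff ..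

definition supported_messages :: "nat ring \<Rightarrow> nat \<Rightarrow> nat \<Rightarrow> nat set \<Rightarrow> (nat \<Rightarrow> nat \<Rightarrow> nat) set" where
  "supported_messages R m t S =
     PiE {1..m} (\<lambda>c. if c \<in> S then PiE {..<t} (\<lambda>_. carrier R) else {\<lambda>k\<in>{..<t}. \<zero>\<^bsub>R\<^esub>})"

lemma supported_messages_subset:
  assumes "ring R"
  shows "supported_messages R m t S \<subseteq> messages R m t"
proof -
  interpret ring R by (fact assms)
  show ?thesis
    unfolding supported_messages_def messages_def by (rule PiE_mono) auto
qed

lemma card_supported_messages:
  assumes "finite (carrier R)" "S \<subseteq> {1..m}"
  shows "card (supported_messages R m t S) = card (carrier R) ^ (t * card S)"
proof -
  let ?T = "PiE {..<t} (\<lambda>_. carrier R)"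
  have "card (supported_messages R m t S) =
      (\<Prod>c\<in>{1..m}. card (if c \<in> S then ?T else {\<lambda>k\<in>{..<t}. \<zero>\<^bsub>R\<^esub>}))"
    unfolding supported_messages_def by (rule card_PiE) simp
  also have "\<dots> = (\<Prod>c\<in>{1..m}. if c \<in> S then card ?T else 1)"
    by (rule prod.cong) auto
  also have "\<dots> = card ?T ^ card S"
    using assms(2) by (simp add: prod.If_cases Int_absorb1)
  finally show ?thesis
    by (simp add: card_PiE power_mult)
qed

lemma supported_messages_outside:
  assumes "x \<in> supported_messages R m t S" "y \<in> supported_messages R m t S" "c \<notin> S"
  shows "x c = y c"
proof (cases "c \<in> {1..m}")
  case True
  then show ?thesis
    using PiE_mem[OF assms(1)[unfolded supported_messages_def] True]
      PiE_mem[OF assms(2)[unfolded supported_messages_def] True] assms(3) by simp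
next
  case False
  then show ?thesis
    using PiE_arb[OF assms(1)[unfolded supported_messages_def] False]
      PiE_arb[OF assms(2)[unfolded supported_messages_def] False] by simp
qed

text \<open>The ranking rk witnesses that the side information restricted to S is acyclic.\<close>

lemma index_code_inj_on_supported:
  fixes rk :: "nat \<Rightarrow> nat"
  assumes "ring R" and code: "is_index_code R m A t r \<phi>" and S: "S \<subseteq> {1..m}"
    and acyclic: "\<And>i j. i \<in> S \<Longrightarrow> j \<in> S \<Longrightarrow> j \<in> A i \<Longrightarrow> rk j < rk i"
  shows "inj_on \<phi> (supported_messages R m t S)"
proof (rule inj_onI)
  let ?X = "supported_messages R m t S"
  fix x y assume x: "x \<in> ?X" and y: "y \<in> ?X" and eq: "\<phi> x = \<phi> y"
  have decode: "\<forall>i\<in>{1..m}. \<forall>x\<in>messages R m t. \<forall>y\<in>messages R m t.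
      \<phi> x = \<phi> y \<longrightarrow> restrict x (A i) = restrict y (A i) \<longrightarrow> x i = y i"
    using code unfolding is_index_code_iff by (rule conjunct2)
  have xy: "x \<in> messages R m t" "y \<in> messages R m t"
    using x y supported_messages_subset[OF assms(1)] by blast+
  note outside = supported_messages_outside[OF x y]
  have inside: "x i = y i" if "i \<in> S" for i
    using that
  proof (induction "rk i" arbitrary: i rule: less_induct)
    case less
    have "x c = y c" if "c \<in> A i" for c
    proof (cases "c \<in> S")
      case True
      then show ?thesis
        using less.hyps acyclic[OF less.prems True that] by blast
    qed (rule outside)
    then have "restrict x (A i) = restrict y (A i)"
      by (rule restrict_ext)
    moreover have "i \<in> {1..m}"
      using less.prems S by blast
    ultimately show ?case
      using decode xy eq by blast
  qed
  show "x = y"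
  proof
    fix c show "x c = y c"
      by (cases "c \<in> S") (simp_all add: inside outside)
  qed
qed

lemma index_code_acyclic_bound:
  fixes rk :: "nat \<Rightarrow> nat"
  assumes R: "field R" "finite (carrier R)" and code: "is_index_code R m A t r \<phi>"
    and S: "S \<subseteq> {1..m}" and acyclic: "\<And>i j. i \<in> S \<Longrightarrow> j \<in> S \<Longrightarrow> j \<in> A i \<Longrightarrow> rk j < rk i"
  shows "card S * t \<le> r"
proof -
  interpret field R by (fact R(1))
  let ?X = "supported_messages R m t S"
  have "card (carrier R) ^ (t * card S) = card ?X"
    by (rule card_supported_messages[OF R(2) S, symmetric])
  also have "\<dots> \<le> card (codewords R r)"
  proof (rule card_inj_on_le)
    show "inj_on \<phi> ?X"
      using index_code_inj_on_supported[OF is_ring code S acyclic] .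
    show "\<phi> ` ?X \<subseteq> codewords R r"
      using code supported_messages_subset[OF is_ring] unfolding is_index_code_def by blast
    show "finite (codewords R r)"
      using R(2) by (simp add: codewords_def finite_PiE)
  qed
  also have "\<dots> = card (carrier R) ^ r"
    by (simp add: codewords_def card_PiE)
  finally have "card (carrier R) ^ (t * card S) \<le> card (carrier R) ^ r" .
  moreover have "card {\<zero>\<^bsub>R\<^esub>, \<one>\<^bsub>R\<^esub>} \<le> card (carrier R)"
    using R(2) by (intro card_mono) auto
  then have "1 < card (carrier R)"
    using one_not_zero by simp
  ultimately have "t * card S \<le> r"
    by (rule power_le_imp_le_exp[rotated])
  then show ?thesis
    by (simp add: mult.commute)
qed

lemma beta_eqI:
  assumes "field R" "finite (carrier R)" "is_index_code R m A 1 k \<phi>"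
    and lower: "\<And>(R :: nat ring) t r \<phi>. field R \<Longrightarrow> finite (carrier R) \<Longrightarrow> 1 \<le> t \<Longrightarrow>
      is_index_code R m A t r \<phi> \<Longrightarrow> k * t \<le> r"
  shows "beta m A = real k"
  unfolding beta_def
proof (rule cInf_eq_minimum)
  show "real k \<in> {real r / real t |r t. \<exists>(R :: nat ring) \<phi>.
      field R \<and> finite (carrier R) \<and> 1 \<le> t \<and> is_index_code R m A t r \<phi>}"
    using assms(1-3) by (intro CollectI exI[of _ k] exI[of _ "1::nat"]) auto
next
  fix x assume "x \<in> {real r / real t |r t. \<exists>(R :: nat ring) \<phi>.
      field R \<and> finite (carrier R) \<and> 1 \<le> t \<and> is_index_code R m A t r \<phi>}"
  then obtain r t R \<phi> where x: "x = real r / real t" and t: "1 \<le> t"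
    and "field R" "finite (carrier R)" "is_index_code R m A t r \<phi>"
    by blast
  then have "real k * real t \<le> real r"
    using lower by (metis of_nat_le_iff of_nat_mult)
  then show "real k \<le> x"
    unfolding x using t by (simp add: le_divide_eq)
qed

lemma parity_determines_bit:
  fixes X Y :: "'a \<Rightarrow> nat"
  assumes "finite C" "d \<in> C" "\<And>c. c \<in> C - {d} \<Longrightarrow> X c = Y c" "X d \<le> 1" "Y d \<le> 1"
    and "(\<Sum>c\<in>C. X c) mod 2 = (\<Sum>c\<in>C. Y c) mod 2"
  shows "X d = Y d"
proof -
  have "(\<Sum>c\<in>C - {d}. X c) = (\<Sum>c\<in>C - {d}. Y c)"
    using assms(3) by (rule sum.cong[OF refl])
  then have "(X d + (\<Sum>c\<in>C - {d}. Y c)) mod 2 = (Y d + (\<Sum>c\<in>C - {d}. Y c)) mod 2"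
    using assms(6) by (simp add: sum.remove[OF assms(1,2)])
  then show ?thesis
    using assms(4,5) by presburger
qed

section \<open>Matchings and the UMCD algorithm\<close>

definition matching :: "nat set list \<Rightarrow> nat set \<Rightarrow> (nat \<times> nat) set \<Rightarrow> bool" where
  "matching rows L M \<longleftrightarrow>
     M \<subseteq> {(s, c). s < length rows \<and> c \<in> L \<and> c \<in> rows ! s} \<and> inj_on fst M \<and> inj_on snd M"

lemma mcm_eq_Max_matching: "mcm rows L = Max {card M | M. matching rows L M}"
  by (simp add: mcm_def matching_def)

lemma matching_card_le_length:
  assumes "matching rows L M"
  shows "card M \<le> length rows"
proof -
  have "card M = card (fst ` M)"
    using assms by (simp add: matching_def card_image)
  also have "\<dots> \<le> card {..<length rows}"
    using assms by (intro card_mono) (auto simp: matching_def)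
  finally show ?thesis by simp
qed

lemma matching_card_le_card:
  assumes "finite L" "matching rows L M"
  shows "card M \<le> card L"
proof -
  have "card M = card (snd ` M)"
    using assms by (simp add: matching_def card_image)
  also have "\<dots> \<le> card L"
    using assms by (intro card_mono) (auto simp: matching_def)
  finally show ?thesis .
qed

lemma matching_finite:
  assumes "matching rows L M"
  shows "finite M"
proof -
  have "fst ` M \<subseteq> {..<length rows}"
    using assms by (auto simp: matching_def)
  then have "finite (fst ` M)"
    by (rule finite_subset) simp
  then show ?thesis
    using assms by (simp add: matching_def finite_image_iff)
qed

lemma finite_matching_cards: "finite {card M | M. matching rows L M}"
  by (rule finite_subset[of _ "{..length rows}"]) (auto dest: matching_card_le_length)

lemma mcm_ge: "matching rows L M \<Longrightarrow> card M \<le> mcm rows L"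
  unfolding mcm_eq_Max_matching by (rule Max_ge[OF finite_matching_cards]) blast

lemma mcm_attained:
  obtains M where "matching rows L M" "card M = mcm rows L"
proof -
  have "matching rows L {}"
    by (simp add: matching_def)
  then have "mcm rows L \<in> {card M | M. matching rows L M}"
    unfolding mcm_eq_Max_matching by (intro Max_in[OF finite_matching_cards]) blast
  then obtain M where "mcm rows L = card M" "matching rows L M"
    by blast
  then show thesis
    using that by simp
qed

lemma mcm_le_length: "mcm rows L \<le> length rows"
  by (metis mcm_attained matching_card_le_length)

lemma mcm_le_card: "finite L \<Longrightarrow> mcm rows L \<le> card L"
  by (metis mcm_attained matching_card_le_card)

lemma mcm_ge_disjoint_rows:
  assumes S: "S \<subseteq> {..<length rows}"
    and meets: "\<And>s. s \<in> S \<Longrightarrow> rows ! s \<inter> L \<noteq> {}"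
    and disjoint: "\<And>s s'. s \<in> S \<Longrightarrow> s' \<in> S \<Longrightarrow> s \<noteq> s' \<Longrightarrow> rows ! s \<inter> rows ! s' = {}"
  shows "card S \<le> mcm rows L"
proof -
  define f where "f s = (SOME c. c \<in> rows ! s \<inter> L)" for s
  have f: "f s \<in> rows ! s \<inter> L" if "s \<in> S" for s
    unfolding f_def using meets[OF that] some_in_eq by metis
  have inj: "inj_on f S"
  proof (rule inj_onI)
    fix s s' assume s: "s \<in> S" "s' \<in> S" and "f s = f s'"
    then have "f s \<in> rows ! s \<inter> rows ! s'"
      using f by (metis Int_iff)
    then show "s = s'"
      using disjoint[OF s] by auto
  qed
  let ?M = "(\<lambda>s. (s, f s)) ` S"
  have "matching rows L ?M"
    unfolding matching_def using S f inj by (auto simp: inj_on_def)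
  then have "card ?M \<le> mcm rows L"
    by (rule mcm_ge)
  moreover have "card ?M = card S"
    by (rule card_image) (simp add: inj_on_def)
  ultimately show ?thesis
    by simp
qed

lemma mcm_append_ge:
  assumes "c \<in> r" "c \<notin> L"
  shows "mcm rows L + 1 \<le> mcm (rows @ [r]) (insert c L)"
proof -
  obtain M where M: "matching rows L M" "card M = mcm rows L"
    by (rule mcm_attained)
  let ?M = "insert (length rows, c) M"
  have sub: "M \<subseteq> {(s, c). s < length rows \<and> c \<in> L \<and> c \<in> rows ! s}"
    using M(1) by (simp add: matching_def)
  have "matching (rows @ [r]) (insert c L) ?M"
    using M(1) sub assms unfolding matching_def
    by (auto simp: nth_append inj_on_insert)
  then have "card ?M \<le> mcm (rows @ [r]) (insert c L)"
    by (rule mcm_ge)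
  moreover have "(length rows, c) \<notin> M"
    using sub by auto
  then have "card ?M = card M + 1"
    using matching_finite[OF M(1)] by simp
  ultimately show ?thesis
    using M(2) by simp
qed

definition umcd_row :: "(nat \<Rightarrow> nat set) \<Rightarrow> nat \<Rightarrow> nat set" where
  "umcd_row A w = insert w (A w)"

lemma umcd_reach_subset: "umcd_reach m A N rows \<Longrightarrow> N \<subseteq> {1..m}"
  by (induction rule: umcd_reach.induct) auto

lemma umcd_reach_terminates:
  assumes "umcd_reach m A N rows"
  shows "\<exists>rows'. umcd_reach m A {} rows'"
  using assms
proof (induction "card N" arbitrary: N rows rule: less_induct)
  case less
  show ?case
  proof (cases "N = {}")
    case True
    then show ?thesis
      using less.prems by blast
  next
    case False
    then obtain w where w: "w \<in> N" "\<forall>v\<in>N. card (A w) \<le> card (A v)"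
      using ex_has_least_nat[of "\<lambda>v. v \<in> N" _ "\<lambda>v. card (A v)"] by blast
    define rows' where "rows' = rows @ [insert w (A w)]"
    define N' where
      "N' = {i \<in> N - {w}. mcm rows' (insert i (Bset m A i)) \<noteq> mcm rows' (Bset m A i) + 1}"
    have reach: "umcd_reach m A N' rows'"
      using less.prems False w unfolding rows'_def N'_def by (rule umcd_reach.step) auto
    have "finite N"
      using umcd_reach_subset[OF less.prems] by (rule finite_subset) simp
    then have "card N' < card N"
      using w(1) unfolding N'_def by (intro psubset_card_mono) auto
    then show ?thesis
      using less.hyps reach by blast
  qed
qed

lemma umcd_output_exists: "\<exists>k. umcd_output m A k"
  using umcd_reach_terminates[OF umcd_reach.init] unfolding umcd_output_def by blast

section \<open>The side information of I_7(l)\<close>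

text \<open>The odd elements c of L1 and the even elements c + 2l + 1 of L2 form l+1 pairs; these
  pairs are exactly the side-information sets of the receivers in L3 (lemma I7_A_L3).\<close>

definition I7_paired :: "nat \<Rightarrow> nat \<Rightarrow> bool" where
  "I7_paired l c \<longleftrightarrow> 1 \<le> c \<and> c \<le> 4*l+2 \<and> (odd c \<longleftrightarrow> c \<le> 2*l+1)"

definition I7_partner :: "nat \<Rightarrow> nat \<Rightarrow> nat" where
  "I7_partner l c = (if I7_paired l c then if odd c then c + (2*l+1) else c - (2*l+1) else c)"

definition I7_low :: "nat \<Rightarrow> nat \<Rightarrow> nat" where
  "I7_low l j = 2*(j - (4*l+3)) + 1"

abbreviation I7_B :: "nat \<Rightarrow> nat \<Rightarrow> nat set" where
  "I7_B l \<equiv> Bset (I7_m l) (I7_A l)"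

lemma I7_partner_paired:
  assumes "I7_paired l c"
  shows "I7_paired l (I7_partner l c)" "I7_partner l (I7_partner l c) = c"
    "odd (c + I7_partner l c)"
  using assms by (auto simp: I7_partner_def I7_paired_def)

lemma I7_partner_unpaired: "\<not> I7_paired l c \<Longrightarrow> I7_partner l c = c"
  by (simp add: I7_partner_def)

lemma I7_partner_range:
  "1 \<le> c \<Longrightarrow> c \<le> 4*l+2 \<Longrightarrow> 1 \<le> I7_partner l c \<and> I7_partner l c \<le> 4*l+2"
  by (auto simp: I7_partner_def I7_paired_def)

lemma I7_low_paired: "j \<le> 5*l+3 \<Longrightarrow> I7_paired l (I7_low l j)"
  by (auto simp: I7_low_def I7_paired_def)

lemma I7_A_subset: "I7_A l i \<subseteq> {1..5*l+3} - {i}"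
  by (auto simp: I7_A_def odds_def evens_def Let_def)

lemma I7_A_iff: "c \<in> I7_A l i \<longleftrightarrow> 1 \<le> c \<and> c \<le> 5*l+3 \<and> c \<noteq> i \<and> c \<notin> I7_B l i"
  using I7_A_subset[of l i] by (auto simp: Bset_def I7_m_def)

lemma I7_A_L3:
  assumes "4*l+3 \<le> j" "j \<le> 5*l+3"
  shows "I7_A l j = {I7_low l j, I7_partner l (I7_low l j)}"
  using assms
  by (auto simp: I7_A_def odds_def evens_def Let_def I7_low_def I7_partner_def I7_paired_def)

lemma I7_paired_in_A_L3:
  assumes "I7_paired l c"
  obtains j where "4*l+3 \<le> j" "j \<le> 5*l+3" "I7_A l j = {c, I7_partner l c}"
proof (cases "odd c")
  case True
  define j where "j = (c - 1) div 2 + (4*l+3)"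
  have "I7_low l j = c" "j \<le> 5*l+3"
    using assms True unfolding j_def I7_low_def I7_paired_def by auto
  then show thesis
    using that[of j] I7_A_L3[of l j] unfolding j_def by simp
next
  case False
  define j where "j = (c - (2*l+2)) div 2 + (4*l+3)"
  have "I7_low l j = I7_partner l c" "j \<le> 5*l+3"
    using assms False unfolding j_def I7_low_def I7_paired_def I7_partner_def by auto
  then show thesis
    using that[of j] I7_A_L3[of l j] I7_partner_paired(2)[OF assms] unfolding j_def
    by (simp add: insert_commute)
qed

lemma I7_L3_rows_disjoint:
  assumes "4*l+3 \<le> j" "j \<le> 5*l+3" "4*l+3 \<le> j'" "j' \<le> 5*l+3" "j \<noteq> j'"
  shows "umcd_row (I7_A l) j \<inter> umcd_row (I7_A l) j' = {}"
  using assms by (auto simp: umcd_row_def I7_A_L3 I7_low_def I7_partner_def I7_paired_def)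

lemma I7_card_A_L3:
  assumes "4*l+3 \<le> j" "j \<le> 5*l+3"
  shows "card (I7_A l j) = 2"
proof -
  have "I7_low l j \<noteq> I7_partner l (I7_low l j)"
    using I7_partner_paired(3)[OF I7_low_paired[OF assms(2)]] by auto
  then show ?thesis
    using I7_A_L3[OF assms] by simp
qed

lemma I7_B_L12_iff:
  assumes "1 \<le> i" "i \<le> 4*l+2"
  shows "c \<in> I7_B l i \<longleftrightarrow> c \<noteq> i \<and> (c = I7_partner l i \<or> I7_paired l c \<and> even (c + i))"
  using assms
  by (auto simp: Bset_def I7_m_def I7_A_def odds_def evens_def Let_def I7_partner_def I7_paired_def)

lemma I7_B_paired:
  assumes "1 \<le> i" "i \<le> 4*l+2" "c \<in> I7_B l i"
  shows "I7_paired l c" "I7_partner l c \<notin> I7_B l i"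
proof -
  note B = I7_B_L12_iff[OF assms(1,2)]
  show "I7_paired l c"
    using assms(3) I7_partner_paired[of l i] I7_partner_unpaired[of l i] unfolding B by metis
  then show "I7_partner l c \<notin> I7_B l i"
    using assms(3) I7_partner_paired[of l i] I7_partner_paired[of l c] I7_partner_unpaired[of l i]
    unfolding B by (metis odd_add)
qed

lemma I7_B_partner_in_A:
  assumes i: "1 \<le> i" "i \<le> 4*l+2" and c: "c \<in> I7_B l i" "c \<noteq> I7_partner l i"
  shows "I7_partner l c \<in> I7_A l i"
proof -
  have paired: "I7_paired l c" and "I7_partner l c \<notin> I7_B l i"
    using I7_B_paired[OF i c(1)] by auto
  moreover have "I7_partner l c \<noteq> i"
    using c(2) I7_partner_paired(2)[OF paired] by auto
  moreover have "I7_paired l (I7_partner l c)"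
    using I7_partner_paired(1)[OF paired] .
  ultimately show ?thesis
    unfolding I7_A_iff I7_paired_def by auto
qed

lemma I7_L3_subset_A:
  assumes "1 \<le> i" "i \<le> 4*l+2" "4*l+3 \<le> j" "j \<le> 5*l+3"
  shows "j \<in> I7_A l i"
proof -
  have "j \<notin> I7_B l i"
    using assms I7_partner_range[OF assms(1,2)]
    unfolding I7_B_L12_iff[OF assms(1,2)] I7_paired_def by auto
  then show ?thesis
    using assms unfolding I7_A_iff by auto
qed

lemma I7_B_card:
  assumes i: "1 \<le> i" "i \<le> 4*l+2"
  shows "card (I7_B l i) \<le> l+1"
proof -
  let ?g = "\<lambda>j. the_elem (I7_A l j \<inter> I7_B l i)"
  have "c \<in> ?g ` {4*l+3..5*l+3}" if c: "c \<in> I7_B l i" for c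
  proof -
    obtain j where j: "4*l+3 \<le> j" "j \<le> 5*l+3" "I7_A l j = {c, I7_partner l c}"
      using I7_paired_in_A_L3 I7_B_paired(1)[OF i c] by blast
    have "I7_A l j \<inter> I7_B l i = {c}"
      unfolding j(3) using c I7_B_paired(2)[OF i c] by blast
    then have "?g j = c"
      by simp
    then show ?thesis
      using j(1,2) by (metis atLeastAtMost_iff imageI)
  qed
  then have "card (I7_B l i) \<le> card (?g ` {4*l+3..5*l+3})"
    by (intro card_mono) auto
  also have "\<dots> \<le> l+1"
    using card_image_le[of "{4*l+3..5*l+3}" ?g] by simp
  finally show ?thesis .
qed

lemma I7_card_A_L12:
  assumes "1 \<le> l" "1 \<le> w" "w \<le> 4*l+2"
  shows "2 < card (I7_A l w)"
proof -
  have A: "I7_A l w = {1..5*l+3} - insert w (I7_B l w)"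
  proof (rule Set.set_eqI)
    fix c show "c \<in> I7_A l w \<longleftrightarrow> c \<in> {1..5*l+3} - insert w (I7_B l w)"
      using I7_A_iff[of c l w] by simp
  qed
  have sub: "insert w (I7_B l w) \<subseteq> {1..5*l+3}"
    using assms unfolding Bset_def I7_m_def by auto
  then have "card ({1..5*l+3} - insert w (I7_B l w)) = 5*l+3 - card (insert w (I7_B l w))"
    using card_Diff_subset[OF finite_subset[OF sub finite_atLeastAtMost] sub] by simp
  moreover have "finite (I7_B l w)"
    unfolding Bset_def by simp
  then have "card (insert w (I7_B l w)) \<le> l+2"
    using I7_B_card[OF assms(2,3)] by (simp add: card_insert_if)
  ultimately have "2 < card ({1..5*l+3} - insert w (I7_B l w))"
    using assms(1) by linarith
  then show ?thesis
    unfolding A .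
qed

lemma I7_pair_meets_B:
  assumes i: "1 \<le> i" "i \<le> 4*l+2" and c: "c \<in> {i, I7_partner l i}" and a: "I7_paired l a"
  shows "{a, I7_partner l a} \<inter> (insert i (I7_B l i) - {c}) \<noteq> {}"
proof -
  note B = I7_B_L12_iff[OF i]
  obtain d where d: "d \<in> {a, I7_partner l a}" "even (d + i)" "I7_paired l d"
    "I7_partner l d \<in> {a, I7_partner l a}"
  proof (cases "even (a + i)")
    case True
    then show thesis
      using that[of a] a I7_partner_paired[OF a] by blast
  next
    case False
    then have "even (I7_partner l a + i)"
      using I7_partner_paired(3)[OF a] by presburger
    then show thesis
      using that[of "I7_partner l a"] a I7_partner_paired[OF a] by simp
  qed
  show ?thesis
  proof (cases "d = c")
    case False
    have "d \<in> insert i (I7_B l i)"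
      using B[of d] d(2,3) by blast
    then show ?thesis
      using False d(1) by blast
  next
    case True
    have "d = i"
    proof (rule ccontr)
      assume "d \<noteq> i"
      then have "d = I7_partner l i" "I7_partner l i \<noteq> i"
        using True c by auto
      then have "I7_paired l i"
        using I7_partner_unpaired by metis
      then show False
        using I7_partner_paired(3)[of l i] d(2) \<open>d = I7_partner l i\<close> by presburger
    qed
    then have "I7_partner l d \<in> I7_B l i" "I7_partner l d \<noteq> c"
      using True B[of "I7_partner l d"] I7_partner_paired(3)[OF d(3)] by auto
    then show ?thesis
      using d(4) by blast
  qed
qed

lemma I7_L3_row_meets_B:
  assumes "1 \<le> i" "i \<le> 5*l+3" "4*l+3 \<le> j" "j \<le> 5*l+3" "i \<noteq> j"
  shows "umcd_row (I7_A l) j \<inter> I7_B l i \<noteq> {}"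
proof (cases "i \<le> 4*l+2")
  case True
  have "insert i (I7_B l i) - {i} = I7_B l i"
    by (auto simp: Bset_def)
  then show ?thesis
    using I7_pair_meets_B[OF assms(1) True _ I7_low_paired[OF assms(4)], of i] I7_A_L3[OF assms(3,4)]
    by (auto simp: umcd_row_def)
next
  case False
  then have "j \<notin> I7_A l i"
    using assms I7_A_L3[of l i] by (auto simp: I7_low_def I7_partner_def I7_paired_def)
  then have "j \<in> I7_B l i"
    using assms by (simp add: Bset_def I7_m_def)
  then show ?thesis
    by (auto simp: umcd_row_def)
qed

lemma I7_partner_pair_meets_row:
  assumes i: "1 \<le> i" "i \<le> 4*l+2" and w: "1 \<le> w" "w \<le> 4*l+2" "i \<noteq> w"
  shows "{i, I7_partner l i} \<inter> umcd_row (I7_A l) w \<noteq> {}"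
proof (cases "i \<in> I7_B l w")
  case True
  then have "I7_partner l i \<notin> I7_B l w"
    using I7_B_paired(2)[OF w(1,2)] by blast
  then have "I7_partner l i \<in> umcd_row (I7_A l) w"
    using I7_partner_range[OF i] I7_A_iff[of "I7_partner l i" l w] by (auto simp: umcd_row_def)
  then show ?thesis
    by blast
next
  case False
  then have "i \<in> umcd_row (I7_A l) w"
    using i w I7_A_iff[of i l w] by (auto simp: umcd_row_def)
  then show ?thesis
    by blast
qed

section \<open>UMCD on I_7(l)\<close>

lemma I7_mcm_ge_L3_rows:
  assumes "distinct js" "set js \<subseteq> {4*l+3..5*l+3}" "\<And>j. j \<in> set js \<Longrightarrow> umcd_row (I7_A l) j \<inter> L \<noteq> {}"
  shows "length js \<le> mcm (map (umcd_row (I7_A l)) js @ rs) L"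
proof -
  have "card {..<length js} \<le> mcm (map (umcd_row (I7_A l)) js @ rs) L"
  proof (rule mcm_ge_disjoint_rows)
    fix s assume "s \<in> {..<length js}"
    then show "(map (umcd_row (I7_A l)) js @ rs) ! s \<inter> L \<noteq> {}"
      using assms(3) by (simp add: nth_append)
  next
    fix s s' assume "s \<in> {..<length js}" "s' \<in> {..<length js}" "s \<noteq> s'"
    moreover have "js ! s \<noteq> js ! s'"
      using calculation assms(1) by (simp add: nth_eq_iff_index_eq)
    moreover have "js ! s \<in> {4*l+3..5*l+3}" "js ! s' \<in> {4*l+3..5*l+3}"
      using calculation assms(2) by (auto dest!: nth_mem)
    ultimately show "(map (umcd_row (I7_A l)) js @ rs) ! s \<inter> (map (umcd_row (I7_A l)) js @ rs) ! s' = {}"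
      using I7_L3_rows_disjoint by (simp add: nth_append)
  qed simp
  then show ?thesis by simp
qed

lemma I7_umcd_keeps_all:
  assumes "distinct js" "set js \<subseteq> {4*l+3..5*l+3}" "1 \<le> i" "i \<le> 5*l+3" "i \<notin> set js"
  defines "rows \<equiv> map (umcd_row (I7_A l)) js"
  shows "mcm rows (insert i (I7_B l i)) \<noteq> mcm rows (I7_B l i) + 1"
proof -
  have "umcd_row (I7_A l) j \<inter> I7_B l i \<noteq> {}" if "j \<in> set js" for j
  proof -
    have "4*l+3 \<le> j" "j \<le> 5*l+3" "i \<noteq> j" using assms(2,5) that by auto
    then show ?thesis using I7_L3_row_meets_B[of i l j] assms(3,4) by blast
  qed
  then have "length rows \<le> mcm rows (I7_B l i)"
    using I7_mcm_ge_L3_rows[OF assms(1,2), of "I7_B l i" "[]"] unfolding rows_def by simp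
  moreover have "mcm rows (insert i (I7_B l i)) \<le> length rows"
    by (rule mcm_le_length)
  ultimately show ?thesis by linarith
qed

lemma I7_umcd_removes_all:
  assumes js: "distinct js" "set js = {4*l+3..5*l+3}"
    and i: "1 \<le> i" "i \<le> 4*l+2" and w: "1 \<le> w" "w \<le> 4*l+2" "i \<noteq> w"
  defines "rows \<equiv> map (umcd_row (I7_A l)) js @ [umcd_row (I7_A l) w]"
  shows "mcm rows (insert i (I7_B l i)) = mcm rows (I7_B l i) + 1"
proof -
  have len: "length js = l+1"
    using distinct_card[OF js(1)] js(2) by simp
  have L3: "4*l+3 \<le> j" "j \<le> 5*l+3" if "j \<in> set js" for j
    using that js(2) by auto
  have "umcd_row (I7_A l) j \<inter> I7_B l i \<noteq> {}" if "j \<in> set js" for j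
    using I7_L3_row_meets_B[of i l j] i L3[OF that] by simp
  then have "l+1 \<le> mcm rows (I7_B l i)"
    using I7_mcm_ge_L3_rows[OF js(1) equalityD1[OF js(2)]] len unfolding rows_def by metis
  moreover have "mcm rows (I7_B l i) \<le> l+1"
    using mcm_le_card[of "I7_B l i" rows] I7_B_card[OF i] by (simp add: Bset_def)
  moreover have "l+2 \<le> mcm rows (insert i (I7_B l i))"
  proof -
    obtain c where c: "c \<in> {i, I7_partner l i}" "c \<in> umcd_row (I7_A l) w"
      using I7_partner_pair_meets_row[OF i w] by blast
    have "umcd_row (I7_A l) j \<inter> (insert i (I7_B l i) - {c}) \<noteq> {}" if "j \<in> set js" for j
      using I7_pair_meets_B[OF i c(1) I7_low_paired[OF L3(2)[OF that]]] I7_A_L3[OF L3[OF that]]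
      by (auto simp: umcd_row_def)
    then have "l+1 \<le> mcm (map (umcd_row (I7_A l)) js) (insert i (I7_B l i) - {c})"
      using I7_mcm_ge_L3_rows[OF js(1) equalityD1[OF js(2)], of _ "[]"] len by simp
    also have "\<dots> + 1 \<le> mcm rows (insert c (insert i (I7_B l i) - {c}))"
      unfolding rows_def using c(2) by (intro mcm_append_ge) auto
    also have "insert c (insert i (I7_B l i) - {c}) = insert i (I7_B l i)"
      using c(1) I7_B_L12_iff[OF i] by auto
    finally show ?thesis by simp
  qed
  moreover have "mcm rows (insert i (I7_B l i)) \<le> l+2"
    using mcm_le_length[of rows] len unfolding rows_def by simp
  ultimately show ?thesis by linarith
qed

lemma I7_umcd_picks_L3:
  assumes "1 \<le> l" "w \<in> N" "\<forall>v\<in>N. card (I7_A l w) \<le> card (I7_A l v)"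
    and "N \<subseteq> {1..5*l+3}" "v \<in> N" "4*l+3 \<le> v" "v \<le> 5*l+3"
  shows "4*l+3 \<le> w"
proof (rule ccontr)
  assume "\<not> 4*l+3 \<le> w"
  then have "2 < card (I7_A l w)"
    using I7_card_A_L12[OF assms(1)] assms(2,4) by fastforce
  moreover have "card (I7_A l w) \<le> 2"
    using assms(3,5) I7_card_A_L3[OF assms(6,7)] by fastforce
  ultimately show False
    by simp
qed

lemma I7_umcd_reach_cases:
  assumes "umcd_reach (I7_m l) (I7_A l) N rows" "1 \<le> l"
  shows "(\<exists>js. distinct js \<and> set js \<subseteq> {4*l+3..5*l+3} \<and>
            rows = map (umcd_row (I7_A l)) js \<and> N = {1..5*l+3} - set js)
         \<or> (N = {} \<and> length rows = l+2)"
  using assms(1)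
proof (induction rule: umcd_reach.induct)
  case init
  show ?case by (intro disjI1 exI[of _ "[]"]) (simp add: I7_m_def)
next
  case (step N rows w rows' N')
  obtain js where js: "distinct js" "set js \<subseteq> {4*l+3..5*l+3}"
      "rows = map (umcd_row (I7_A l)) js" "N = {1..5*l+3} - set js"
    using step.IH step.hyps(2) by blast
  have w: "1 \<le> w" "w \<le> 5*l+3" "w \<notin> set js"
    using step.hyps(3) js(4) by auto
  have rows': "rows' = map (umcd_row (I7_A l)) (js @ [w])"
    using step.hyps(5) js(3) by (simp add: umcd_row_def)
  show ?case
  proof (cases "set js = {4*l+3..5*l+3}")
    case True
    then have w4: "w \<le> 4*l+2"
      using w by auto
    have "mcm rows' (insert i (I7_B l i)) = mcm rows' (I7_B l i) + 1" if "i \<in> N - {w}" for i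
      using I7_umcd_removes_all[OF js(1) True _ _ w(1) w4, of i] that js(4) True rows' by auto
    then have "N' = {}"
      using step.hyps(6) by auto
    moreover have "length rows' = l+2"
      using rows' distinct_card[OF js(1)] True by simp
    ultimately show ?thesis by simp
  next
    case False
    then obtain v where v: "4*l+3 \<le> v" "v \<le> 5*l+3" "v \<notin> set js"
      using js(2) by (metis atLeastAtMost_iff subsetI subset_antisym)
    have "N \<subseteq> {1..5*l+3}" "v \<in> N"
      using js(4) v by auto
    then have w3: "4*l+3 \<le> w"
      using I7_umcd_picks_L3[OF assms(2) step.hyps(3,4)] v(1,2) by blast
    have "mcm rows' (insert i (I7_B l i)) \<noteq> mcm rows' (I7_B l i) + 1" if "i \<in> N - {w}" for i
      using I7_umcd_keeps_all[of "js @ [w]" l i] that js w w3 rows' by auto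
    then have "N' = {1..5*l+3} - set (js @ [w])"
      using step.hyps(6) js(4) by auto
    then show ?thesis
      using js w w3 rows' by (intro disjI1 exI[of _ "js @ [w]"]) auto
  qed
qed

lemma I7_umcd_output:
  assumes "1 \<le> l" "umcd_output (I7_m l) (I7_A l) k"
  shows "k = l+2"
proof -
  obtain rows where rows: "umcd_reach (I7_m l) (I7_A l) {} rows" "k = length rows"
    using assms(2) unfolding umcd_output_def by blast
  have "\<not> set js \<subseteq> {4*l+3..5*l+3}" if "{} = {1..5*l+3} - set js" for js :: "nat list"
  proof
    assume "set js \<subseteq> {4*l+3..5*l+3}"
    moreover have "1 \<in> set js" using that by auto
    ultimately show False by auto
  qed
  then show ?thesis
    using I7_umcd_reach_cases[OF rows(1) assms(1)] rows(2) by blast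
qed

section \<open>Optimality\<close>

text \<open>For l = 0 the receiver 3 of L3 would know message 2, closing a cycle.\<close>

lemma I7_index_code_bound:
  assumes "1 \<le> l" "field R" "finite (carrier R)" "is_index_code R (I7_m l) (I7_A l) t r \<phi>"
  shows "(l+2) * t \<le> r"
proof -
  let ?S = "insert 2 {4*l+3..5*l+3}"
  have L3: "I7_A l j \<inter> ?S = {}" if "4*l+3 \<le> j" "j \<le> 5*l+3" for j
  proof -
    have "I7_low l j \<noteq> 2" "I7_partner l (I7_low l j) \<noteq> 2"
      using assms(1) that by (simp_all add: I7_low_def I7_partner_def I7_paired_def)
    moreover have "I7_low l j \<le> 4*l+2" "I7_partner l (I7_low l j) \<le> 4*l+2"
      using I7_low_paired[OF that(2)] I7_partner_paired(1) unfolding I7_paired_def by blast+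
    ultimately show ?thesis
      using I7_A_L3[OF that] by auto
  qed
  have "card ?S * t \<le> r"
  proof (rule index_code_acyclic_bound[OF assms(2-4), where rk = "\<lambda>i. if i = 2 then 1 else 0"])
    show "?S \<subseteq> {1..I7_m l}"
      by (auto simp: I7_m_def)
  next
    fix i j assume ij: "i \<in> ?S" "j \<in> ?S" "j \<in> I7_A l i"
    have "i = 2"
    proof (rule ccontr)
      assume "i \<noteq> 2"
      then have "I7_A l i \<inter> ?S = {}"
        using ij(1) L3 by simp
      then show False
        using ij(2,3) by blast
    qed
    moreover have "j \<noteq> i"
      using ij(3) I7_A_subset by blast
    ultimately show "(if j = 2 then 1 else 0) < (if i = 2 then 1 else (0::nat))"
      by simp
  qed
  then show ?thesis
    by simp
qed

text \<open>This is L1 \<union> O_L2: all unpaired elements and the odd member of every pair.\<close>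

definition I7_parity_set :: "nat \<Rightarrow> nat set" where
  "I7_parity_set l = {c. 1 \<le> c \<and> c \<le> 4*l+2 \<and> (I7_paired l c \<longrightarrow> odd c)}"

lemma I7_unpaired_in_parity_set:
  "1 \<le> i \<Longrightarrow> i \<le> 4*l+2 \<Longrightarrow> \<not> I7_paired l i \<Longrightarrow> i \<in> I7_parity_set l"
  by (simp add: I7_parity_set_def)

lemma I7_parity_set_partner:
  assumes "I7_paired l i"
  shows "i \<in> I7_parity_set l \<longleftrightarrow> I7_partner l i \<notin> I7_parity_set l"
  using assms I7_partner_paired[OF assms] unfolding I7_parity_set_def I7_paired_def by auto

definition I7_check :: "nat \<Rightarrow> nat \<Rightarrow> nat set" where
  "I7_check l k = (if k \<le> l then umcd_row (I7_A l) (4*l+3+k) else I7_parity_set l)"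

definition I7_encoder :: "nat \<Rightarrow> (nat \<Rightarrow> nat \<Rightarrow> nat) \<Rightarrow> nat \<Rightarrow> nat" where
  "I7_encoder l x = (\<lambda>k\<in>{..<l+2}. (\<Sum>c\<in>I7_check l k. x c 0) mod 2)"

locale I7_equal_checks =
  fixes l :: nat and X Y :: "nat \<Rightarrow> nat"
  assumes bits: "\<And>c. 1 \<le> c \<Longrightarrow> c \<le> 5*l+3 \<Longrightarrow> X c \<le> 1 \<and> Y c \<le> 1"
    and checks: "\<And>k. k \<le> l+1 \<Longrightarrow> (\<Sum>c\<in>I7_check l k. X c) mod 2 = (\<Sum>c\<in>I7_check l k. Y c) mod 2"
begin

lemma row_determines:
  assumes j: "4*l+3 \<le> j" "j \<le> 5*l+3" and c: "c \<in> umcd_row (I7_A l) j"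
    and agree: "\<And>d. d \<in> umcd_row (I7_A l) j - {c} \<Longrightarrow> X d = Y d"
  shows "X c = Y c"
proof (rule parity_determines_bit[OF _ c agree])
  show "finite (umcd_row (I7_A l) j)"
    by (simp add: umcd_row_def I7_A_L3[OF j])
  show "X c \<le> 1" "Y c \<le> 1"
    using bits c I7_A_subset[of l j] j by (auto simp: umcd_row_def)
  have "j - (4*l+3) \<le> l" "4*l+3 + (j - (4*l+3)) = j"
    using j by auto
  then show "(\<Sum>c\<in>umcd_row (I7_A l) j. X c) mod 2 = (\<Sum>c\<in>umcd_row (I7_A l) j. Y c) mod 2"
    using checks[of "j - (4*l+3)"] by (simp add: I7_check_def)
qed

lemma parity_set_determines:
  assumes d: "d \<in> I7_parity_set l" and agree: "\<And>c. c \<in> I7_parity_set l - {d} \<Longrightarrow> X c = Y c"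
  shows "X d = Y d"
proof (rule parity_determines_bit[OF _ d agree])
  show "finite (I7_parity_set l)"
    by (simp add: I7_parity_set_def)
  show "X d \<le> 1" "Y d \<le> 1"
    using bits d by (auto simp: I7_parity_set_def)
  show "(\<Sum>c\<in>I7_parity_set l. X c) mod 2 = (\<Sum>c\<in>I7_parity_set l. Y c) mod 2"
    using checks[of "l+1"] by (simp add: I7_check_def)
qed

context
  fixes i :: nat
  assumes i: "1 \<le> i" "i \<le> 4*l+2"
    and side: "\<And>c. c \<in> I7_A l i \<Longrightarrow> X c = Y c"
begin

text \<open>Receiver i knows all of L3, so the parity of each L3 row ties together the two members
  of its pair; every bit other than i and its partner has a known partner.\<close>

lemma pair_determines:
  assumes "4*l+3 \<le> j" "j \<le> 5*l+3" "c \<in> I7_A l j" "\<And>d. d \<in> I7_A l j - {c} \<Longrightarrow> X d = Y d"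
  shows "X c = Y c"
  using row_determines[of j c] assms side[OF I7_L3_subset_A[OF i assms(1,2)]]
  by (auto simp: umcd_row_def)

lemma agree_off_partner:
  assumes "1 \<le> c" "c \<le> 5*l+3" "c \<noteq> i" "c \<noteq> I7_partner l i"
  shows "X c = Y c"
proof (cases "c \<in> I7_A l i")
  case True
  then show ?thesis
    by (rule side)
next
  case False
  then have c: "c \<in> I7_B l i"
    using assms I7_A_iff by blast
  then have "I7_paired l c"
    using I7_B_paired(1)[OF i] by blast
  then obtain j where j: "4*l+3 \<le> j" "j \<le> 5*l+3" "I7_A l j = {c, I7_partner l c}"
    by (rule I7_paired_in_A_L3)
  have "I7_partner l c \<in> I7_A l i"
    by (rule I7_B_partner_in_A[OF i c assms(4)])
  then show ?thesis
    using pair_determines[OF j(1,2)] j(3) side by auto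
qed

lemma decodes_L12: "X i = Y i"
proof -
  have agree: "X c = Y c" if "c \<in> I7_parity_set l" "c \<noteq> i" "c \<noteq> I7_partner l i" for c
    using agree_off_partner that by (simp add: I7_parity_set_def)
  show ?thesis
  proof (cases "I7_paired l i")
    case False
    then show ?thesis
      using parity_set_determines[OF I7_unpaired_in_parity_set[OF i False]] agree
        I7_partner_unpaired[OF False] by auto
  next
    case paired: True
    obtain j where j: "4*l+3 \<le> j" "j \<le> 5*l+3" "I7_A l j = {i, I7_partner l i}"
      using I7_paired_in_A_L3[OF paired] by blast
    have "I7_partner l i \<noteq> i"
      using I7_partner_paired(3)[OF paired] by auto
    moreover have "X i = Y i \<or> X (I7_partner l i) = Y (I7_partner l i)"
      using parity_set_determines[of i] parity_set_determines[of "I7_partner l i"] agree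
        I7_parity_set_partner[OF paired] by blast
    ultimately show ?thesis
      using pair_determines[OF j(1,2), of i] j(3) by auto
  qed
qed

end

lemma decodes:
  assumes "1 \<le> i" "i \<le> 5*l+3" "\<And>c. c \<in> I7_A l i \<Longrightarrow> X c = Y c"
  shows "X i = Y i"
proof (cases "i \<le> 4*l+2")
  case True
  then show ?thesis
    using decodes_L12 assms by blast
next
  case False
  then show ?thesis
    using row_determines[of i i] assms I7_A_subset[of l i] by (auto simp: umcd_row_def)
qed

end

lemma GF2_message_bit:
  assumes "z \<in> messages GF2 m 1" "c \<in> {1..m}"
  shows "z c \<in> PiE {..<1} (\<lambda>_. {0, 1})" "z c 0 \<le> 1"
proof -
  have "z \<in> PiE {1..m} (\<lambda>_. PiE {..<1} (\<lambda>_. {0, 1}))"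
    using assms(1) by (simp add: messages_def GF2_def)
  then show bit: "z c \<in> PiE {..<1} (\<lambda>_. {0, 1})"
    by (rule PiE_mem) (fact assms(2))
  then have "z c 0 \<in> {0, 1}"
    by (meson PiE_mem lessThan_iff zero_less_one)
  then show "z c 0 \<le> 1"
    by auto
qed

lemma I7_index_code: "is_index_code GF2 (I7_m l) (I7_A l) 1 (l+2) (I7_encoder l)"
  unfolding is_index_code_iff
proof (intro conjI ballI impI)
  have "n mod 2 \<in> {0, 1}" for n :: nat
    by auto
  then show "I7_encoder l \<in> messages GF2 (I7_m l) 1 \<rightarrow> codewords GF2 (l+2)"
    by (auto simp: I7_encoder_def codewords_def GF2_def)
next
  fix i x y
  assume i: "i \<in> {1..I7_m l}"
    and msg: "x \<in> messages GF2 (I7_m l) 1" "y \<in> messages GF2 (I7_m l) 1"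
    and enc: "I7_encoder l x = I7_encoder l y"
    and side: "restrict x (I7_A l i) = restrict y (I7_A l i)"
  interpret I7_equal_checks l "\<lambda>c. x c 0" "\<lambda>c. y c 0"
  proof
    fix c assume "1 \<le> c" "c \<le> 5*l+3"
    then show "x c 0 \<le> 1 \<and> y c 0 \<le> 1"
      using GF2_message_bit(2)[OF msg(1)] GF2_message_bit(2)[OF msg(2)] by (simp add: I7_m_def)
  next
    fix k :: nat assume "k \<le> l+1"
    then show "(\<Sum>c\<in>I7_check l k. x c 0) mod 2 = (\<Sum>c\<in>I7_check l k. y c 0) mod 2"
      using fun_cong[OF enc, of k] by (simp add: I7_encoder_def)
  qed
  have "x c 0 = y c 0" if "c \<in> I7_A l i" for c
    using fun_cong[OF side, of c] that by simp
  then have bit0: "x i 0 = y i 0"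
    using decodes i by (simp add: I7_m_def)
  show "x i = y i"
    by (rule PiE_ext[OF GF2_message_bit(1)[OF msg(1) i] GF2_message_bit(1)[OF msg(2) i]])
      (use bit0 in auto)
qed
theorem proposition11:
  fixes l :: nat
  assumes "l \<ge> 1"
  shows "(\<exists>k. umcd_output (I7_m l) (I7_A l) k) \<and>
         (\<forall>k. umcd_output (I7_m l) (I7_A l) k \<longrightarrow> beta (I7_m l) (I7_A l) = real k)"
proof -
  have beta: "beta (I7_m l) (I7_A l) = real (l+2)"
  proof (rule beta_eqI[OF field_GF2 _ I7_index_code])
    show "finite (carrier GF2)"
      by (simp add: GF2_def)
  qed (rule I7_index_code_bound[OF assms])
  show ?thesis
  proof (intro conjI allI impI)
    show "\<exists>k. umcd_output (I7_m l) (I7_A l) k"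
      by (rule umcd_output_exists)
    fix k assume "umcd_output (I7_m l) (I7_A l) k"
    then show "beta (I7_m l) (I7_A l) = real k"
      using I7_umcd_output[OF assms] beta by simp
  qed
qed

end
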